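(* Let $n$ be a positive integer, let $\alpha$ be a real number with $\frac{1}{2} \le \alpha < 1$, and let $\beta = 1-\alpha$. Suppose that $\frac{t_1}{A_1}, \frac{t_2}{A_2}, \dots, \frac{t_{n+1}}{A_{n+1}}$ are rational numbers, each of which is an $(n+3)$-bit underapproximation to $\beta$. Then the rational number \[ 1+\frac{t_1}{A_1}+\frac{t_1t_2}{A_1A_2}+\cdots+\prod_{i=1}^{n+1}\frac{t_i}{A_i} \] is an $n$-bit underapproximation to $\frac{1}{\alpha}$.
   Context: For a real number $\alpha$ and a positive integer $k$, a rational number $\alpha'$ is called a $k$-bit underapproximation to $\alpha$ if $0 \le \alpha - \alpha' \le \frac{1}{2^k}$. *)

theory Defs
  imports Complex_Main
begin

definition underapprox :: "nat \<Rightarrow> rat \<Rightarrow> real \<Rightarrow> bool" where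
  "underapprox k a' a \<longleftrightarrow> 0 \<le> a - of_rat a' \<and> a - of_rat a' \<le> 1 / 2 ^ k"

end

theory Submission
  imports Defs
begin

text \<open>Evaluate the nested form \<open>1 + q\<^sub>1(1 + q\<^sub>2(1 + \<dots>))\<close> of the sum of partial products from
  the inside out. Since \<open>1/\<alpha> = 1 + \<beta>/\<alpha>\<close>, each Horner step maps an error \<open>D\<close> of the inner value to
  the error \<open>(\<beta> - q)/\<alpha> + q D\<close>; with \<open>0 \<le> \<beta> - q \<le> \<epsilon>\<close>, \<open>1/\<alpha> \<le> 2\<close> and \<open>q \<le> \<beta> \<le> 1/2\<close> this is at most
  \<open>2\<epsilon> + D/2\<close>. Starting from the error \<open>1/\<alpha> - 1 \<le> 1\<close> of the innermost value, \<open>m\<close> steps give an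
  error of at most \<open>4\<epsilon> + 1/2^m\<close>, which for \<open>\<epsilon> = 1/2^(n+3)\<close> and \<open>m = n + 1\<close> is exactly \<open>1/2^n\<close>.\<close>

fun horner :: "(nat \<Rightarrow> 'a::comm_semiring_1) \<Rightarrow> nat \<Rightarrow> nat \<Rightarrow> 'a" where
  "horner q j 0 = 1"
| "horner q j (Suc m) = 1 + q j * horner q (Suc j) m"

lemma horner_eq_sum_prod: "horner q j m = (\<Sum>k = 0..m. \<Prod>i = j..<j+k. q i)"
proof (induction m arbitrary: j)
  case 0
  then show ?case by simp
next
  case (Suc m)
  have "(\<Sum>k = 0..Suc m. \<Prod>i = j..<j+k. q i) = 1 + (\<Sum>k = 0..m. \<Prod>i = j..<j+Suc k. q i)"
    by (subst sum.atLeast0_atMost_Suc_shift) simp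
  also have "\<dots> = 1 + q j * (\<Sum>k = 0..m. \<Prod>i = Suc j..<Suc j+k. q i)"
    unfolding sum_distrib_left
    by (intro arg_cong2[where f = "(+)"] sum.cong refl) (simp add: prod.atLeast_Suc_lessThan mult.assoc)
  finally show ?case
    using Suc by simp
qed

lemma horner_step_error:
  fixes \<alpha> \<beta> \<epsilon> q T :: real
  assumes "1/2 \<le> \<alpha>" "\<alpha> < 1" "\<beta> = 1 - \<alpha>"
    and "2 * \<epsilon> \<le> 1" "\<beta> - \<epsilon> \<le> q" "q \<le> \<beta>"
    and "0 \<le> T" "0 \<le> 1/\<alpha> - T" "1/\<alpha> - T \<le> \<delta>"
  shows "0 \<le> 1 + q * T" "0 \<le> 1/\<alpha> - (1 + q * T)" "1/\<alpha> - (1 + q * T) \<le> 2 * \<epsilon> + \<delta> / 2"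
proof -
  define D where "D = 1/\<alpha> - T"
  have "0 < \<alpha>" "1 \<le> 1/\<alpha>" "1/\<alpha> \<le> 2"
    using assms(1,2) by (auto simp: divide_simps)
  have error: "1/\<alpha> - (1 + q * T) = (\<beta> - q)/\<alpha> + q * D"
    using \<open>0 < \<alpha>\<close> assms(3) by (simp add: D_def field_simps)
  have "(\<beta> - q)/\<alpha> \<le> 2 * \<epsilon>"
  proof -
    have "(\<beta> - q)/\<alpha> = (\<beta> - q) * (1/\<alpha>)" by simp
    also have "\<dots> \<le> \<epsilon> * 2"
      using assms(5,6) \<open>0 < \<alpha>\<close> \<open>1/\<alpha> \<le> 2\<close> by (intro mult_mono) auto
    finally show ?thesis by simp
  qed
  moreover have "q * D \<le> \<beta> * D" and "\<beta> * D \<le> 1/2 * D"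
    using assms(1,3,6,8) by (intro mult_right_mono; simp add: D_def)+
  ultimately show "1/\<alpha> - (1 + q * T) \<le> 2 * \<epsilon> + \<delta> / 2"
    using assms(9) error by (simp add: D_def)
  show "0 \<le> 1/\<alpha> - (1 + q * T)"
  proof (cases "0 \<le> q")
    case True
    then show ?thesis
      using error \<open>0 < \<alpha>\<close> assms(6,8) by (simp add: D_def)
  next
    case False
    then show ?thesis
      using \<open>1 \<le> 1/\<alpha>\<close> assms(7) mult_nonpos_nonneg[of q T] by simp
  qed
  show "0 \<le> 1 + q * T"
  proof (cases "0 \<le> q")
    case True
    then show ?thesis using assms(7) by simp
  next
    case False
    have "q * (1/\<alpha>) \<le> q * T"
      using False assms(8) by (intro mult_left_mono_neg) auto
    moreover have "q * 2 \<le> q * (1/\<alpha>)"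
      using False \<open>1/\<alpha> \<le> 2\<close> by (intro mult_left_mono_neg) auto
    moreover have "-\<epsilon> \<le> q"
      using assms(2,3,5) by simp
    ultimately show ?thesis using assms(4) by linarith
  qed
qed

lemma horner_error:
  fixes \<alpha> \<beta> \<epsilon> :: real and q :: "nat \<Rightarrow> real"
  assumes "1/2 \<le> \<alpha>" "\<alpha> < 1" "\<beta> = 1 - \<alpha>" "0 \<le> \<epsilon>" "2 * \<epsilon> \<le> 1"
    and "\<And>i. i \<in> {j..<j+m} \<Longrightarrow> \<beta> - \<epsilon> \<le> q i \<and> q i \<le> \<beta>"
  shows "0 \<le> horner q j m \<and> 0 \<le> 1/\<alpha> - horner q j m \<and> 1/\<alpha> - horner q j m \<le> 4 * \<epsilon> + 1/2^m"
  using assms(6)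
proof (induction m arbitrary: j)
  case 0
  have "1 \<le> 1/\<alpha>" "1/\<alpha> \<le> 2"
    using assms(1,2) by (auto simp: divide_simps)
  then show ?case using assms(4) by simp
next
  case (Suc m)
  have "0 \<le> horner q (Suc j) m \<and> 0 \<le> 1/\<alpha> - horner q (Suc j) m
      \<and> 1/\<alpha> - horner q (Suc j) m \<le> 4 * \<epsilon> + 1/2^m"
    using Suc.prems by (intro Suc.IH) auto
  then have inner: "0 \<le> horner q (Suc j) m" "0 \<le> 1/\<alpha> - horner q (Suc j) m"
      "1/\<alpha> - horner q (Suc j) m \<le> 4 * \<epsilon> + 1/2^m"
    by auto
  have "\<beta> - \<epsilon> \<le> q j" "q j \<le> \<beta>"
    using Suc.prems[of j] by auto
  note step = horner_step_error[OF assms(1-3,5) this inner]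
  have "2 * \<epsilon> + (4 * \<epsilon> + 1/2^m) / 2 = 4 * \<epsilon> + 1/2^Suc m"
    by simp
  then show ?case
    using step by (simp only: horner.simps)
qed

theorem lemma3p1:
  fixes n :: nat and \<alpha> \<beta> :: real and q :: "nat \<Rightarrow> rat"
  assumes "n \<ge> 1"
    and "1 / 2 \<le> \<alpha>" and "\<alpha> < 1"
    and "\<beta> = 1 - \<alpha>"
    and "\<And>i. i \<in> {1..n+1} \<Longrightarrow> underapprox (n + 3) (q i) \<beta>"
  shows "underapprox n (\<Sum>k = 0..n+1. \<Prod>i = 1..k. q i) (1 / \<alpha>)"
proof -
  define \<epsilon> :: real where "\<epsilon> = 1/2^(n+3)"
  have "0 \<le> \<epsilon>" "2 * \<epsilon> \<le> 1"
    using power_increasing[of 1 "n+3" "2::real"] by (simp_all add: \<epsilon>_def)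
  moreover have "\<And>i. i \<in> {1..<1+(n+1)} \<Longrightarrow> \<beta> - \<epsilon> \<le> of_rat (q i) \<and> of_rat (q i) \<le> \<beta>"
    using assms(5) unfolding underapprox_def \<epsilon>_def by fastforce
  ultimately have bound: "0 \<le> 1/\<alpha> - horner (\<lambda>i. of_rat (q i)) 1 (n+1)"
      "1/\<alpha> - horner (\<lambda>i. of_rat (q i)) 1 (n+1) \<le> 4 * \<epsilon> + 1/2^(n+1)"
    using horner_error[OF assms(2-4), where q = "\<lambda>i. of_rat (q i)" and j = 1 and m = "n+1"] by blast+
  have sum_eq_horner: "of_rat (\<Sum>k = 0..n+1. \<Prod>i = 1..k. q i) = horner (\<lambda>i. of_rat (q i)) 1 (n+1)"
    unfolding horner_eq_sum_prod of_rat_sum of_rat_prod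
    by (simp add: atLeastLessThanSuc_atLeastAtMost del: sum.atLeast0_atMost_Suc prod.op_ivl_Suc)
  have "4 * \<epsilon> + 1/2^(n+1) = (1::real)/2^n"
    by (simp add: \<epsilon>_def field_simps power_add)
  then show ?thesis
    unfolding underapprox_def sum_eq_horner using bound by linarith
qed

end
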